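(* Consider Variant 1 of the generalized one-way trading problem under Assumption A, with $0<L<U$. Let $\alpha>1$ be the solution of $\alpha=\ln\frac{U-L}{\alpha L-L}$ and define $\phi^*(w)=L+(U-L)e^{\frac{\alpha}{C}w-\alpha}$ for $w\in[0,C]$ and $\phi^*(w)=+\infty$ for $w>C$. Then the competitive ratio of $\mathsf{OTA}_{\phi^*}$ for Variant 1 is $\alpha$.
   Context: Variant 1: a single knapsack of capacity $C$; items $n=1,\dots,N$ arrive one at a time; item $n$ has size $D_n>0$ and value function $g_n:[0,D_n]\to\mathbb R_{\ge0}$, revealed on arrival. Any remaining capacity at the end is filled at the lowest marginal value $L$: the offline problem is $\max\sum_n g_n(y_n)+(C-\sum_n y_n)L$ s.t. $\sum_n y_n\le C$, $0\le y_n\le D_n$, and an online algorithm choosing $y_1,\dots,y_N$ earns $\sum_n g_n(y_n)+(C-\sum_n y_n)L$. Assumption A: each $g_n$ is non-decreasing, differentiable, concave, $g_n(0)=0$, $L\le g_n'\le U$, with $C,L,U$ known. An online algorithm irrevocably chooses $y_n$ on arrival using only items $1,\dots,n$ and $C,L,U$; competitive ratio is $\sup_{\mathcal I}\mathrm{OPT}/\mathrm{ALG}$ over instances satisfying Assumption A. $\mathsf{OTA}_\phi$: start with $w^{(1)}=0$; upon arrival of item $n$ choose $y_n^*\in\arg\max_{0\le y\le D_n} g_n(y)-\int_{w^{(n)}}^{w^{(n)}+y}\phi(u)du$ and set $w^{(n+1)}=w^{(n)}+y_n^*$. *)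

theory Defs
  imports "HOL-Analysis.Analysis"
begin

definition assumpA :: "real \<Rightarrow> real \<Rightarrow> real \<Rightarrow> (real \<Rightarrow> real) \<Rightarrow> bool" where
  "assumpA L U D g \<longleftrightarrow> D > 0 \<and> g 0 = 0 \<and> mono_on {0..D} g \<and> concave_on {0..D} g \<and>
     (\<exists>g'. \<forall>x\<in>{0..D}. (g has_real_derivative g' x) (at x within {0..D}) \<and> L \<le> g' x \<and> g' x \<le> U)"

text \<open>The threshold function phi* on [0,C] (it is +infinity beyond C, which is modelled by
  restricting choices to w + y \<le> C in the OTA rule below).\<close>
definition phi_star :: "real \<Rightarrow> real \<Rightarrow> real \<Rightarrow> real \<Rightarrow> real \<Rightarrow> real" where
  "phi_star C L U \<alpha> w = L + (U - L) * exp (\<alpha> / C * w - \<alpha>)"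

text \<open>y is a run of OTA_{phi*} on the instance (N, D, g): for every item n < N, with current
  utilization w = y_0 + ... + y_{n-1}, y_n maximizes g_n(y) - integral of phi* over [w, w+y]
  over 0 \<le> y \<le> D_n (values with w+y > C have pseudo-utility -infinity).\<close>
definition ota_run :: "real \<Rightarrow> real \<Rightarrow> real \<Rightarrow> real \<Rightarrow> nat \<Rightarrow> (nat \<Rightarrow> real) \<Rightarrow>
    (nat \<Rightarrow> real \<Rightarrow> real) \<Rightarrow> (nat \<Rightarrow> real) \<Rightarrow> bool" where
  "ota_run C L U \<alpha> N D g y \<longleftrightarrow>
     (\<forall>n<N. let w = (\<Sum>i<n. y i) in
        0 \<le> y n \<and> y n \<le> D n \<and> w + y n \<le> C \<and>
        (\<forall>z. 0 \<le> z \<and> z \<le> D n \<and> w + z \<le> C \<longrightarrow>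
           g n z - integral {w..w + z} (phi_star C L U \<alpha>)
             \<le> g n (y n) - integral {w..w + y n} (phi_star C L U \<alpha>)))"

definition payoff :: "real \<Rightarrow> real \<Rightarrow> nat \<Rightarrow> (nat \<Rightarrow> real \<Rightarrow> real) \<Rightarrow> (nat \<Rightarrow> real) \<Rightarrow> real" where
  "payoff C L N g y = (\<Sum>n<N. g n (y n)) + (C - (\<Sum>n<N. y n)) * L"

definition feasible :: "real \<Rightarrow> nat \<Rightarrow> (nat \<Rightarrow> real) \<Rightarrow> (nat \<Rightarrow> real) \<Rightarrow> bool" where
  "feasible C N D y \<longleftrightarrow> (\<Sum>n<N. y n) \<le> C \<and> (\<forall>n<N. 0 \<le> y n \<and> y n \<le> D n)"

text \<open>Offline optimum (the maximum is attained; we write it as a supremum).\<close>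
definition OPT :: "real \<Rightarrow> real \<Rightarrow> nat \<Rightarrow> (nat \<Rightarrow> real) \<Rightarrow> (nat \<Rightarrow> real \<Rightarrow> real) \<Rightarrow> real" where
  "OPT C L N D g = Sup {payoff C L N g y | y. feasible C N D y}"

definition cr_ota_star :: "real \<Rightarrow> real \<Rightarrow> real \<Rightarrow> real \<Rightarrow> ereal" where
  "cr_ota_star C L U \<alpha> = Sup {ereal (OPT C L N D g / payoff C L N g y) | N D g y.
       (\<forall>n<N. assumpA L U (D n) (g n)) \<and> ota_run C L U \<alpha> N D g y}"

end

theory Submission
  imports Defs
begin

text \<open>
  Let \<open>\<Phi>\<close> be an antiderivative of \<open>\<phi> = \<phi>\<^sup>*\<close> and \<open>w\<close> the final utilization of an
  OTA run. Comparing the choice \<open>y\<^sub>n\<close> with buying nothing gives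
  \<open>\<Phi>(w\<^sub>n\<^sub>+\<^sub>1) - \<Phi>(w\<^sub>n) \<le> g\<^sub>n(y\<^sub>n)\<close>; comparing it with any \<open>x\<^sub>n\<close> gives
  \<open>g\<^sub>n(x\<^sub>n) - \<phi>(w) x\<^sub>n \<le> g\<^sub>n(y\<^sub>n) - (\<Phi>(w\<^sub>n\<^sub>+\<^sub>1) - \<Phi>(w\<^sub>n))\<close>, where for \<open>x\<^sub>n > y\<^sub>n\<close> one uses
  concavity and the first-order condition \<open>g\<^sub>n'(y\<^sub>n) \<le> \<phi>(w\<^sub>n + y\<^sub>n)\<close>. Summing, and using
  \<open>L \<le> \<phi>(w)\<close> for the unused capacity, a feasible allocation earns at most
  \<open>ALG - (\<Phi>(w) - \<Phi>(0)) - (C - w) L + C \<phi>(w)\<close>. The equation defining \<open>\<alpha>\<close> says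
  \<open>\<phi>(0) = \<alpha> L\<close>, which makes \<open>C \<phi>(w) = \<alpha> (\<Phi>(w) - \<Phi>(0)) + \<alpha> (C - w) L\<close> an identity;
  with the first inequality summed, the bound is at most \<open>\<alpha> ALG\<close>. Tightness: for one item of
  size \<open>C\<close> with constant marginal value \<open>\<alpha> L = \<phi>(0)\<close>, OTA buys nothing and earns \<open>C L\<close>, while buying everything earns \<open>\<alpha> C L\<close>.
\<close>

text \<open>Unlike \<open>convex_on_imp_above_tangent\<close>, this allows the tangent point to be the left
  endpoint, as needed for an OTA choice \<open>y = 0\<close>.\<close>

lemma concave_on_le_right_tangent:
  fixes g :: "real \<Rightarrow> real"
  assumes conc: "concave_on {y..x} g" and deriv: "(g has_real_derivative g') (at y within {y..x})"
    and "y < x"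
  shows "g x - g y \<le> g' * (x - y)"
proof -
  have slope_lim: "((\<lambda>t. (g t - g y) / (t - y)) \<longlongrightarrow> g') (at_right y)"
    using deriv \<open>y < x\<close> by (simp add: has_field_derivative_iff at_within_Icc_at_right)
  have "\<forall>\<^sub>F t in at_right y. (g x - g y) / (x - y) \<le> (g t - g y) / (t - y)"
    using eventually_at_right_real[OF \<open>y < x\<close>]
  proof eventually_elim
    case (elim t)
    have "convex_on {y..x} (\<lambda>s. - g s)"
      using conc by (simp add: concave_on_def)
    from convex_onD_Icc'[OF this, of t] elim
    have "- g t \<le> (g y - g x) / (x - y) * (t - y) - g y"
      by simp
    with elim show ?case
      by (simp add: field_simps)
  qed
  then have "(g x - g y) / (x - y) \<le> g'"
    by (intro tendsto_le[OF trivial_limit_at_right_real slope_lim tendsto_const])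
  with \<open>y < x\<close> show ?thesis
    by (simp add: field_simps)
qed

lemma has_real_derivative_nonpos_at_right_maximum:
  fixes F :: "real \<Rightarrow> real"
  assumes deriv: "(F has_real_derivative F') (at y within {y..b})" and "y < b"
    and max: "\<And>z. z \<in> {y..b} \<Longrightarrow> F z \<le> F y"
  shows "F' \<le> 0"
proof (rule ccontr)
  assume "\<not> F' \<le> 0"
  then obtain d where "d > 0" and inc: "\<And>h. h > 0 \<Longrightarrow> y + h \<in> {y..b} \<Longrightarrow> h < d \<Longrightarrow> F y < F (y + h)"
    using has_real_derivative_pos_inc_right[OF deriv] by force
  define h where "h = min (d / 2) (b - y)"
  have "h > 0" "y + h \<in> {y..b}" "h < d"
    using \<open>d > 0\<close> \<open>y < b\<close> by (auto simp: h_def)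
  with inc max show False
    by fastforce
qed

lemma OPT_single_linear_item:
  assumes "C \<ge> 0" and "L \<le> c"
  shows "OPT C L 1 (\<lambda>_. C) (\<lambda>_ z. c * z) = c * C"
  unfolding OPT_def
proof (rule cSup_eq_maximum)
  show "c * C \<in> {payoff C L 1 (\<lambda>_ z. c * z) x | x. feasible C 1 (\<lambda>_. C) x}"
    using assms by (auto simp: payoff_def feasible_def intro!: exI[of _ "\<lambda>_. C"])
  have "c * x 0 + (C - x 0) * L \<le> c * C" if "x 0 \<le> C" for x
    using mult_left_mono[OF \<open>L \<le> c\<close>, of "C - x 0"] that by (simp add: algebra_simps)
  then show "p \<le> c * C" if "p \<in> {payoff C L 1 (\<lambda>_ z. c * z) x | x. feasible C 1 (\<lambda>_. C) x}" for p
    using that by (auto simp: payoff_def feasible_def)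
qed

lemma assumpA_linear:
  assumes "D > 0" and "L \<le> c" and "c \<le> U" and "c \<ge> 0"
  shows "assumpA L U D (\<lambda>z. c * z)"
proof -
  have "mono_on {0..D} (\<lambda>z. c * z)"
    using \<open>c \<ge> 0\<close> by (intro mono_onI) (simp add: mult_left_mono)
  moreover have "concave_on {0..D} (\<lambda>z. c * z)"
    by (simp add: concave_on_iff algebra_simps)
  moreover have "((\<lambda>z. c * z) has_real_derivative c) (at x within {0..D})" for x
    by (auto intro!: derivative_eq_intros)
  ultimately show ?thesis
    using assms unfolding assumpA_def by (auto intro!: exI[of _ "\<lambda>_. c"])
qed

locale exp_threshold =
  fixes C L U \<alpha> :: real
  assumes C_pos: "C > 0" and alpha_pos: "\<alpha> > 0" and L_le_U: "L \<le> U"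
begin

abbreviation \<phi> :: "real \<Rightarrow> real" where
  "\<phi> \<equiv> phi_star C L U \<alpha>"

definition \<Phi> :: "real \<Rightarrow> real" where
  "\<Phi> w = L * w + (U - L) * (C / \<alpha>) * exp (\<alpha> / C * w - \<alpha>)"

lemma has_real_derivative_Phi [derivative_intros]:
  assumes "(f has_real_derivative f') (at x within S)"
  shows "((\<lambda>x. \<Phi> (f x)) has_real_derivative \<phi> (f x) * f') (at x within S)"
  unfolding \<Phi>_def using assms C_pos alpha_pos
  by (auto intro!: derivative_eq_intros simp: phi_star_def field_simps)

lemma integral_phi: "a \<le> b \<Longrightarrow> integral {a..b} \<phi> = \<Phi> b - \<Phi> a"
  by (intro integral_unique fundamental_theorem_of_calculus)
    (auto intro!: derivative_eq_intros simp: has_real_derivative_iff_has_vector_derivative[symmetric])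

lemma phi_mono: "a \<le> b \<Longrightarrow> \<phi> a \<le> \<phi> b"
  using C_pos alpha_pos L_le_U
  by (auto simp: phi_star_def intro!: mult_left_mono divide_right_mono)

lemma L_le_phi: "L \<le> \<phi> w"
  using L_le_U by (simp add: phi_star_def)

lemma phi_C: "\<phi> C = U"
  using C_pos by (simp add: phi_star_def)

lemma Phi_diff_bounds:
  assumes "a \<le> b"
  shows "(b - a) * \<phi> a \<le> \<Phi> b - \<Phi> a" and "\<Phi> b - \<Phi> a \<le> (b - a) * \<phi> b"
proof -
  have "\<exists>z\<in>{a..b}. \<Phi> b - \<Phi> a = (b - a) * \<phi> z"
  proof (cases "a = b")
    case False
    with assms have "a < b" by simp
    then show ?thesis
      using MVT2[of a b \<Phi> \<phi>] by (force intro: derivative_eq_intros)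
  qed simp
  then obtain z where "z \<in> {a..b}" and "\<Phi> b - \<Phi> a = (b - a) * \<phi> z" ..
  with assms phi_mono show "(b - a) * \<phi> a \<le> \<Phi> b - \<Phi> a" and "\<Phi> b - \<Phi> a \<le> (b - a) * \<phi> b"
    by (auto intro!: mult_left_mono)
qed

lemma Phi_increment_le:
  assumes "0 \<le> t" and "w + t \<le> v"
  shows "\<Phi> (w + t) - \<Phi> w \<le> t * \<phi> v"
proof -
  have "\<Phi> (w + t) - \<Phi> w \<le> t * \<phi> (w + t)"
    using Phi_diff_bounds(2)[of w "w + t"] assms by simp
  also have "\<dots> \<le> t * \<phi> v"
    using assms phi_mono by (simp add: mult_left_mono)
  finally show ?thesis .
qed

definition ota_choice :: "real \<Rightarrow> real \<Rightarrow> (real \<Rightarrow> real) \<Rightarrow> real \<Rightarrow> bool" where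
  "ota_choice w D g y \<longleftrightarrow> 0 \<le> y \<and> y \<le> D \<and> w + y \<le> C \<and>
     (\<forall>z. 0 \<le> z \<and> z \<le> D \<and> w + z \<le> C \<longrightarrow> g z - (\<Phi> (w + z) - \<Phi> w) \<le> g y - (\<Phi> (w + y) - \<Phi> w))"

lemma ota_run_iff_choices:
  "ota_run C L U \<alpha> N D g y \<longleftrightarrow> (\<forall>n<N. ota_choice (\<Sum>i<n. y i) (D n) (g n) (y n))"
  unfolding ota_run_def ota_choice_def Let_def by (auto simp: integral_phi)

lemma ota_choice_Phi_le:
  assumes "ota_choice w D g y" and "g 0 = 0"
  shows "\<Phi> (w + y) - \<Phi> w \<le> g y"
  using assms unfolding ota_choice_def by (auto dest!: spec[of _ 0])

lemma ota_choice_marginal_le: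
  assumes choice: "ota_choice w D g y" and A: "assumpA L U D g"
    and "y < x" "x \<le> D" "w + y \<le> v" "v \<le> C"
  shows "g x - g y \<le> \<phi> v * (x - y)"
proof -
  obtain g' where deriv: "\<And>t. t \<in> {0..D} \<Longrightarrow> (g has_real_derivative g' t) (at t within {0..D})"
    and g'_le_U: "\<And>t. t \<in> {0..D} \<Longrightarrow> g' t \<le> U"
    using A unfolding assumpA_def by blast
  have y: "y \<in> {0..D}" and "{y..x} \<subseteq> {0..D}"
    using choice \<open>y < x\<close> \<open>x \<le> D\<close> unfolding ota_choice_def by auto
  moreover have "concave_on {y..x} g"
    using A \<open>{y..x} \<subseteq> {0..D}\<close> unfolding assumpA_def concave_on_def
    by (auto intro: convex_on_subset)
  ultimately have "g x - g y \<le> g' y * (x - y)"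
    using \<open>y < x\<close> by (intro concave_on_le_right_tangent has_field_derivative_subset[OF deriv]) auto
  moreover have "g' y \<le> \<phi> (w + y)" if "w + y < C"
  proof -
    define b where "b = min x (C - w)"
    have "y < b" and sub: "{y..b} \<subseteq> {0..D}"
      using \<open>y < x\<close> that \<open>{y..x} \<subseteq> {0..D}\<close> by (auto simp: b_def)
    have "((\<lambda>z. g z - \<Phi> (w + z)) has_real_derivative g' y - \<phi> (w + y)) (at y within {y..b})"
      by (rule derivative_eq_intros has_field_derivative_subset[OF deriv[OF y] sub] refl | simp)+
    moreover have "g z - \<Phi> (w + z) \<le> g y - \<Phi> (w + y)" if "z \<in> {y..b}" for z
      using choice that sub unfolding ota_choice_def b_def by force
    ultimately have "g' y - \<phi> (w + y) \<le> 0"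
      by (rule has_real_derivative_nonpos_at_right_maximum[OF _ \<open>y < b\<close>])
    then show ?thesis by simp
  qed
  then have "g' y \<le> \<phi> v"
    \<comment> \<open>at full capacity there is no first-order condition, but then \<open>g' y \<le> U = \<phi> C\<close>\<close>
  proof (cases "w + y < C")
    case False
    with \<open>w + y \<le> v\<close> \<open>v \<le> C\<close> have "v = C" by simp
    with g'_le_U[OF y] phi_C show ?thesis by simp
  qed (use phi_mono[OF \<open>w + y \<le> v\<close>] in auto)
  ultimately show ?thesis
    using \<open>y < x\<close> by (smt (verit) mult_right_mono)
qed

lemma ota_choice_step_bound:
  assumes choice: "ota_choice w D g y" and A: "assumpA L U D g"
    and "0 \<le> x" "x \<le> D" "w + y \<le> v" "v \<le> C"
  shows "g x - \<phi> v * x \<le> g y - (\<Phi> (w + y) - \<Phi> w)"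
proof -
  have "0 \<le> y"
    using choice unfolding ota_choice_def by simp
  show ?thesis
  proof (cases "x \<le> y")
    case True
    have "g x - (\<Phi> (w + x) - \<Phi> w) \<le> g y - (\<Phi> (w + y) - \<Phi> w)"
      using choice True assms(3,4) unfolding ota_choice_def by auto
    moreover have "\<Phi> (w + x) - \<Phi> w \<le> x * \<phi> v"
      using True assms(3,5) by (intro Phi_increment_le) auto
    ultimately show ?thesis by (simp add: algebra_simps)
  next
    case False
    then have "g x - g y \<le> \<phi> v * (x - y)"
      using assms by (intro ota_choice_marginal_le) auto
    moreover have "\<Phi> (w + y) - \<Phi> w \<le> y * \<phi> v"
      using \<open>0 \<le> y\<close> assms(5) by (rule Phi_increment_le)
    ultimately show ?thesis by (simp add: algebra_simps)
  qed
qed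

lemma ota_run_choice:
  assumes "ota_run C L U \<alpha> N D g y" and "n < N"
  shows "ota_choice (\<Sum>i<n. y i) (D n) (g n) (y n)"
  using assms by (simp add: ota_run_iff_choices)

lemma ota_run_prefix_sums:
  assumes run: "ota_run C L U \<alpha> N D g y" and "n \<le> N"
  shows "0 \<le> (\<Sum>i<n. y i)" and "(\<Sum>i<n. y i) \<le> (\<Sum>i<N. y i)"
proof -
  have "0 \<le> y m" if "m < N" for m
    using ota_run_choice[OF run that] unfolding ota_choice_def by blast
  with \<open>n \<le> N\<close> show "0 \<le> (\<Sum>i<n. y i)" and "(\<Sum>i<n. y i) \<le> (\<Sum>i<N. y i)"
    by (auto intro!: sum_nonneg sum_mono2)
qed

lemma ota_run_sum_le_capacity:
  assumes run: "ota_run C L U \<alpha> N D g y"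
  shows "(\<Sum>i<N. y i) \<le> C"
proof (cases N)
  case (Suc m)
  with ota_run_choice[OF run, of m] show ?thesis
    by (simp add: ota_choice_def)
qed (use C_pos in simp)

lemma Phi_prefix_sums_telescope:
  "(\<Sum>n<N. \<Phi> (\<Sum>i<Suc n. y i) - \<Phi> (\<Sum>i<n. y i)) = \<Phi> (\<Sum>n<N. y n) - \<Phi> 0"
  by (subst sum_lessThan_telescope) simp

lemma ota_run_Phi_le_sum:
  assumes run: "ota_run C L U \<alpha> N D g y" and g0: "\<forall>n<N. g n 0 = 0"
  shows "\<Phi> (\<Sum>n<N. y n) - \<Phi> 0 \<le> (\<Sum>n<N. g n (y n))"
proof -
  have "\<Phi> (\<Sum>n<N. y n) - \<Phi> 0 = (\<Sum>n<N. \<Phi> (\<Sum>i<Suc n. y i) - \<Phi> (\<Sum>i<n. y i))"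
    by (rule Phi_prefix_sums_telescope[symmetric])
  also have "\<dots> \<le> (\<Sum>n<N. g n (y n))"
  proof (intro sum_mono)
    fix n assume "n \<in> {..<N}"
    with g0 have "\<Phi> ((\<Sum>i<n. y i) + y n) - \<Phi> (\<Sum>i<n. y i) \<le> g n (y n)"
      by (intro ota_choice_Phi_le[OF ota_run_choice[OF run]]) auto
    then show "\<Phi> (\<Sum>i<Suc n. y i) - \<Phi> (\<Sum>i<n. y i) \<le> g n (y n)"
      by simp
  qed
  finally show ?thesis .
qed

lemma ota_run_sum_step_bounds:
  assumes run: "ota_run C L U \<alpha> N D g y" and A: "\<forall>n<N. assumpA L U (D n) (g n)"
    and x: "feasible C N D x"
  defines "w \<equiv> \<Sum>n<N. y n"
  shows "(\<Sum>n<N. g n (x n)) - \<phi> w * (\<Sum>n<N. x n) \<le> (\<Sum>n<N. g n (y n)) - (\<Phi> w - \<Phi> 0)"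
proof -
  have "(\<Sum>n<N. g n (x n) - \<phi> w * x n)
      \<le> (\<Sum>n<N. g n (y n) - (\<Phi> (\<Sum>i<Suc n. y i) - \<Phi> (\<Sum>i<n. y i)))"
  proof (intro sum_mono)
    fix n assume "n \<in> {..<N}"
    then have "ota_choice (\<Sum>i<n. y i) (D n) (g n) (y n)" and "(\<Sum>i<Suc n. y i) \<le> w"
      using ota_run_choice[OF run] ota_run_prefix_sums(2)[OF run, of "Suc n"] by (auto simp: w_def)
    then have "g n (x n) - \<phi> w * x n \<le> g n (y n) - (\<Phi> ((\<Sum>i<n. y i) + y n) - \<Phi> (\<Sum>i<n. y i))"
      using \<open>n \<in> {..<N}\<close> A x ota_run_sum_le_capacity[OF run]
      by (intro ota_choice_step_bound) (auto simp: feasible_def w_def)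
    then show "g n (x n) - \<phi> w * x n \<le> g n (y n) - (\<Phi> (\<Sum>i<Suc n. y i) - \<Phi> (\<Sum>i<n. y i))"
      by simp
  qed
  with Phi_prefix_sums_telescope[of y N] show ?thesis
    by (simp add: sum_subtractf sum_distrib_left w_def)
qed

end

locale ota_balanced = exp_threshold +
  assumes L_pos: "L > 0" and L_lt_U: "L < U" and alpha_gt_1: "\<alpha> > 1"
    and alpha_eq: "\<alpha> = ln ((U - L) / (\<alpha> * L - L))"
begin

lemma exp_minus_alpha: "(U - L) * exp (- \<alpha>) = (\<alpha> - 1) * L"
proof -
  have "(U - L) / (\<alpha> * L - L) > 0"
    using L_pos L_lt_U alpha_gt_1 by (simp add: algebra_simps)
  then have "exp \<alpha> = (U - L) / ((\<alpha> - 1) * L)"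
    using alpha_eq by (metis exp_ln left_diff_distrib' mult_1)
  with alpha_gt_1 L_pos show ?thesis
    by (simp add: exp_minus field_simps)
qed

lemma phi_0: "\<phi> 0 = \<alpha> * L"
  using exp_minus_alpha by (simp add: phi_star_def algebra_simps)

lemma alpha_L_le_U: "\<alpha> * L \<le> U"
  using phi_mono[of 0 C] C_pos by (simp add: phi_0 phi_C)

lemma alpha_Phi_eq: "\<alpha> * (\<Phi> w - \<Phi> 0) + \<alpha> * (C - w) * L = C * \<phi> w"
proof -
  define E where "E = exp (\<alpha> / C * w - \<alpha>)"
  have "\<alpha> * (\<Phi> w - \<Phi> 0) = \<alpha> * L * w + C * (U - L) * E - C * ((U - L) * exp (- \<alpha>))"
    using C_pos alpha_pos by (simp add: \<Phi>_def E_def field_simps)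
  also have "\<dots> = \<alpha> * L * w + C * (U - L) * E - C * ((\<alpha> - 1) * L)"
    by (simp only: exp_minus_alpha)
  finally show ?thesis
    by (simp add: phi_star_def E_def algebra_simps)
qed

lemma payoff_le_alpha_payoff_ota:
  assumes run: "ota_run C L U \<alpha> N D g y" and A: "\<forall>n<N. assumpA L U (D n) (g n)"
    and x: "feasible C N D x"
  shows "payoff C L N g x \<le> \<alpha> * payoff C L N g y"
proof -
  define w where "w = (\<Sum>n<N. y n)"
  have "(\<Sum>n<N. x n) \<le> C"
    using x by (simp add: feasible_def)
  then have "payoff C L N g x \<le> (\<Sum>n<N. g n (x n)) + (C - (\<Sum>n<N. x n)) * \<phi> w"
    unfolding payoff_def using L_le_phi by (simp add: mult_left_mono)
  also have "\<dots> \<le> (\<Sum>n<N. g n (y n)) - (\<Phi> w - \<Phi> 0) + C * \<phi> w"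
    using ota_run_sum_step_bounds[OF run A x] by (simp add: w_def algebra_simps)
  also have "\<dots> = (\<Sum>n<N. g n (y n)) + (\<alpha> - 1) * (\<Phi> w - \<Phi> 0) + \<alpha> * (C - w) * L"
    using alpha_Phi_eq[of w] by (simp add: algebra_simps)
  also have "\<dots> \<le> \<alpha> * (\<Sum>n<N. g n (y n)) + \<alpha> * (C - w) * L"
  proof -
    have "\<forall>n<N. g n 0 = 0"
      using A by (simp add: assumpA_def)
    then have "(\<alpha> - 1) * (\<Phi> w - \<Phi> 0) \<le> (\<alpha> - 1) * (\<Sum>n<N. g n (y n))"
      using ota_run_Phi_le_sum[OF run] alpha_gt_1 by (simp add: w_def mult_left_mono)
    then show ?thesis
      by (simp add: algebra_simps)
  qed
  also have "\<dots> = \<alpha> * payoff C L N g y"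
    by (simp add: payoff_def w_def algebra_simps)
  finally show ?thesis .
qed

lemma C_mult_L_le_payoff_ota:
  assumes run: "ota_run C L U \<alpha> N D g y" and g0: "\<forall>n<N. g n 0 = 0"
  shows "C * L \<le> payoff C L N g y"
proof -
  define w where "w = (\<Sum>n<N. y n)"
  have "0 \<le> w"
    using ota_run_prefix_sums(1)[OF run, of N] by (simp add: w_def)
  then have "w * L \<le> w * \<phi> 0"
    using L_le_phi by (simp add: mult_left_mono)
  also have "\<dots> \<le> \<Phi> w - \<Phi> 0"
    using Phi_diff_bounds(1)[OF \<open>0 \<le> w\<close>] by simp
  also have "\<dots> \<le> (\<Sum>n<N. g n (y n))"
    using ota_run_Phi_le_sum[OF run g0] by (simp add: w_def)
  finally show ?thesis
    by (simp add: payoff_def w_def algebra_simps)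
qed

lemma OPT_div_payoff_ota_le:
  assumes run: "ota_run C L U \<alpha> N D g y" and A: "\<forall>n<N. assumpA L U (D n) (g n)"
  shows "OPT C L N D g / payoff C L N g y \<le> \<alpha>"
proof -
  have "feasible C N D (\<lambda>_. 0)"
    using A C_pos by (simp add: feasible_def assumpA_def less_imp_le)
  then have "OPT C L N D g \<le> \<alpha> * payoff C L N g y"
    unfolding OPT_def using payoff_le_alpha_payoff_ota[OF run A] by (intro cSup_least) auto
  moreover have "0 < payoff C L N g y"
  proof -
    have "\<forall>n<N. g n 0 = 0"
      using A by (simp add: assumpA_def)
    with C_mult_L_le_payoff_ota[OF run] show ?thesis
      using C_pos L_pos by (smt (verit) mult_pos_pos)
  qed
  ultimately show ?thesis
    by (simp add: divide_le_eq)
qed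

lemma ota_run_linear_item: "ota_run C L U \<alpha> 1 (\<lambda>_. C) (\<lambda>_ z. \<alpha> * L * z) (\<lambda>_. 0)"
proof -
  have "\<alpha> * L * z \<le> \<Phi> z - \<Phi> 0" if "0 \<le> z" for z
    using Phi_diff_bounds(1)[OF that] by (simp add: phi_0 algebra_simps)
  then show ?thesis
    using C_pos by (simp add: ota_run_iff_choices ota_choice_def)
qed

end

theorem corollary1:
  fixes C L U \<alpha> :: real
  assumes "C > 0" and "0 < L" and "L < U"
    and "\<alpha> > 1" and "\<alpha> = ln ((U - L) / (\<alpha> * L - L))"
  shows "cr_ota_star C L U \<alpha> = ereal \<alpha>"
proof -
  interpret ota_balanced C L U \<alpha>
    using assms by unfold_locales auto
  let ?D = "\<lambda>_::nat. C" and ?g = "\<lambda>(_::nat) z. \<alpha> * L * z" and ?y = "\<lambda>_::nat. 0::real"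
  have "assumpA L U C (\<lambda>z. \<alpha> * L * z)"
    using assms alpha_L_le_U by (intro assumpA_linear) auto
  moreover have "OPT C L 1 ?D ?g / payoff C L 1 ?g ?y = \<alpha>"
    using OPT_single_linear_item[of C L "\<alpha> * L"] assms by (simp add: payoff_def)
  ultimately have "ereal \<alpha> \<le> cr_ota_star C L U \<alpha>"
    unfolding cr_ota_star_def using ota_run_linear_item by (intro Sup_upper) force
  moreover have "cr_ota_star C L U \<alpha> \<le> ereal \<alpha>"
    unfolding cr_ota_star_def using OPT_div_payoff_ota_le by (auto intro!: Sup_least)
  ultimately show ?thesis
    by (rule antisym[rotated])
qed

end
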